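(* Let $(X,\mu)$ be a Lebesgue space with a continuous probability measure $\mu$, and let $\rho$ be a semimetric on $X$, measurable as a function on $(X\times X,\mu\times\mu)$, which satisfies the ultrametric inequality $\rho(x,z)\le\max(\rho(x,y),\rho(y,z))$ for $(\mu\times\mu\times\mu)$-almost all triples $(x,y,z)\in X^3$. Then there exists an ultrametric $\tilde\rho$ on $X$ which coincides with $\rho$ for $(\mu\times\mu)$-almost all pairs and satisfies $\tilde\rho(x,z)\le\max(\tilde\rho(x,y),\tilde\rho(y,z))$ for all triples $x,y,z\in X$.
   Context: A semimetric is a non-negative symmetric function on $X\times X$ satisfying the triangle inequality and vanishing on the diagonal (it may vanish off the diagonal). *)

theory Defs
  imports "HOL-Probability.Probability"
begin

text \<open>A Lebesgue space (standard probability space): the completion of a Borel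
probability measure on a Polish space. The points of the space are all elements
of the Polish type.\<close>
definition lebesgue_space :: "'a::polish_space measure \<Rightarrow> bool" where
  "lebesgue_space M \<longleftrightarrow>
     (\<exists>N. sets N = sets borel \<and> prob_space N \<and> M = completion N)"

definition continuous_measure :: "'a measure \<Rightarrow> bool" where
  "continuous_measure M \<longleftrightarrow> (\<forall>x\<in>space M. emeasure M {x} = 0)"

definition semimetric_on :: "'a set \<Rightarrow> ('a \<Rightarrow> 'a \<Rightarrow> real) \<Rightarrow> bool" where
  "semimetric_on X d \<longleftrightarrow>
     (\<forall>x\<in>X. \<forall>y\<in>X. d x y \<ge> 0) \<and>
     (\<forall>x\<in>X. \<forall>y\<in>X. d x y = d y x) \<and>
     (\<forall>x\<in>X. d x x = 0) \<and>
     (\<forall>x\<in>X. \<forall>y\<in>X. \<forall>z\<in>X. d x z \<le> d x y + d y z)"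

definition ultrametric_on :: "'a set \<Rightarrow> ('a \<Rightarrow> 'a \<Rightarrow> real) \<Rightarrow> bool" where
  "ultrametric_on X d \<longleftrightarrow> semimetric_on X d \<and>
     (\<forall>x\<in>X. \<forall>y\<in>X. \<forall>z\<in>X. d x z \<le> max (d x y) (d y z))"

end

theory Submission
  imports Defs
begin

text \<open>The ultrametric is the essential infimum \<open>\<rho>'(x, z) = ess inf\<^sub>y max (\<rho>(x, y), \<rho>(y, z))\<close>.
  By Fubini, for almost every pair \<open>(x, z)\<close> the ultrametric inequality holds at almost every \<open>y\<close>
  both in the form \<open>\<rho>(x, z) \<le> max (\<rho>(x, y), \<rho>(y, z))\<close>, which gives \<open>\<rho> \<le> \<rho>'\<close>, and in the form
  \<open>\<rho>(y, z) \<le> max (\<rho>(y, x), \<rho>(x, z))\<close>, which bounds \<open>max (\<rho>(x, y), \<rho>(y, z))\<close> by \<open>\<rho>(x, z)\<close> on the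
  positive-measure set of those \<open>y\<close> with \<open>\<rho>(x, y) \<le> \<rho>(x, z)\<close>; hence \<open>\<rho>' = \<rho>\<close> almost everywhere.
  On the full-measure set of typical points, where the relevant Fubini sections hold, \<open>\<rho>'\<close> satisfies
  the ultrametric inequality everywhere: if \<open>y\<close> and \<open>y'\<close> nearly realise \<open>\<rho>'(x, w)\<close> and \<open>\<rho>'(w, z)\<close>,
  the almost-everywhere inequality applied through \<open>w\<close> and then through \<open>y'\<close> bounds \<open>\<rho>(y, z)\<close>.
  Collapsing the atypical points onto one typical point and putting zero on the diagonal finishes
  the construction. Only the fact that \<open>\<mu>\<close> is a probability measure is used: neither the continuity
  nor the standardness of \<open>\<mu>\<close>, nor the triangle inequality for \<open>\<rho>\<close>.\<close>

lemma AE_ex_in_positive_set: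
  assumes "A \<in> sets M" "0 < emeasure M A" "AE x\<in>A in M. P x"
  shows "\<exists>x\<in>A. P x"
proof (rule ccontr)
  assume none: "\<not> (\<exists>x\<in>A. P x)"
  have "AE x in M. x \<notin> A"
    using assms(3) none by (auto elim: eventually_mono)
  then have "emeasure M {x \<in> space M. x \<in> A} = 0"
    using assms(1) by (simp add: AE_iff_measurable[OF _ refl])
  moreover have "{x \<in> space M. x \<in> A} = A"
    using sets.sets_into_space[OF assms(1)] by blast
  ultimately show False
    using assms(2) by simp
qed

lemma ex_nat_sublevel_pos:
  fixes h :: "'a \<Rightarrow> real"
  assumes "0 < emeasure M (space M)" and h[measurable]: "h \<in> borel_measurable M"
  shows "\<exists>n::nat. 0 < emeasure M {y \<in> space M. h y \<le> real n}"
proof (rule ccontr)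
  assume "\<not> ?thesis"
  then have "AE y in M. \<not> h y \<le> real n" for n :: nat
    by (subst AE_iff_measurable[OF _ refl]) (auto simp: not_less)
  then have "AE y in M. \<forall>n::nat. \<not> h y \<le> real n"
    by (simp add: AE_all_countable)
  then obtain y where "\<forall>n::nat. \<not> h y \<le> real n"
    using AE_ex_in_positive_set[OF sets.top assms(1)] by auto
  then show False
    using real_arch_simple by auto
qed

lemma AE_sublevel_pos:
  fixes h :: "'a \<Rightarrow> real"
  assumes h[measurable]: "h \<in> borel_measurable M"
  shows "AE z in M. 0 < emeasure M {y \<in> space M. h y \<le> h z}"
proof -
  \<comment> \<open>\<open>-e\<close> is the essential infimum of \<open>h\<close>; only the level \<open>h z = -e\<close> can fail, and then only if it is null.\<close>
  define e where "e = esssup M (\<lambda>x. ereal (- h x))"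
  have below: "0 < emeasure M {y \<in> space M. h y \<le> h z}" if "ereal (- h z) < e" for z
  proof -
    have "0 < emeasure M {y \<in> space M. ereal (- h z) < ereal (- h y)}"
      using esssup_pos_measure[of "\<lambda>x. ereal (- h x)" M "ereal (- h z)"] that unfolding e_def by simp
    also have "\<dots> \<le> emeasure M {y \<in> space M. h y \<le> h z}"
      by (intro emeasure_mono) auto
    finally show ?thesis .
  qed
  consider (null) "emeasure M {y \<in> space M. e \<le> ereal (- h y)} = 0"
    | (pos) "0 < emeasure M {y \<in> space M. e \<le> ereal (- h y)}"
    by (auto simp: zero_less_iff_neq_zero)
  then show ?thesis
  proof cases
    case null
    then have "AE z in M. ereal (- h z) < e"
      by (subst AE_iff_measurable[OF _ refl]) (auto simp: not_less)
    then show ?thesis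
      by eventually_elim (rule below)
  next
    case pos
    show ?thesis
      using esssup_AE[of "\<lambda>x. ereal (- h x)" M]
    proof eventually_elim
      case (elim z)
      show ?case
      proof (cases "ereal (- h z) < e")
        case False
        then have "e = ereal (- h z)" using elim unfolding e_def by simp
        then show ?thesis using pos by simp
      qed (rule below)
    qed
  qed
qed

lemma le_max_Inf:
  fixes c :: real
  assumes "S \<noteq> {}" "T \<noteq> {}" "bdd_below S" "bdd_below T"
    and "\<And>a b. a \<in> S \<Longrightarrow> b \<in> T \<Longrightarrow> c \<le> max a b"
  shows "c \<le> max (Inf S) (Inf T)"
proof (rule ccontr)
  assume "\<not> ?thesis"
  then obtain a b where "a \<in> S" "a < c" "b \<in> T" "b < c"
    using cInf_less_iff[OF assms(1,3)] cInf_less_iff[OF assms(2,4)] by (auto simp: not_le)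
  then show False
    using assms(5) by force
qed

text \<open>The essential infimum of \<open>f\<close> is defined through the levels \<open>r\<close> with \<open>f \<le> r\<close> almost everywhere
  on some set of positive measure, so that no measurability of \<open>f\<close> is required: the sections of a
  semimetric that is only measurable for the completed product need not be measurable.\<close>

definition positive_sublevels :: "'a measure \<Rightarrow> ('a \<Rightarrow> real) \<Rightarrow> real set" where
  "positive_sublevels M f =
     {r. \<exists>A\<in>sets M. 0 < emeasure M A \<and> (AE y\<in>A in M. f y \<le> r)}"

definition ess_Inf :: "'a measure \<Rightarrow> ('a \<Rightarrow> real) \<Rightarrow> real" where
  "ess_Inf M f = Inf (positive_sublevels M f)"

lemma positive_sublevels_lower_bound:
  assumes "\<And>y. y \<in> space M \<Longrightarrow> c \<le> f y" and "r \<in> positive_sublevels M f"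
  shows "c \<le> r"
proof -
  obtain A where A: "A \<in> sets M" "0 < emeasure M A" "AE y\<in>A in M. f y \<le> r"
    using assms(2) unfolding positive_sublevels_def by blast
  then obtain y where "y \<in> A" "f y \<le> r"
    using AE_ex_in_positive_set[OF A] by auto
  then show ?thesis
    using assms(1) sets.sets_into_space[OF A(1)] by force
qed

lemma bdd_below_positive_sublevels:
  "(\<And>y. y \<in> space M \<Longrightarrow> c \<le> f y) \<Longrightarrow> bdd_below (positive_sublevels M f)"
  using positive_sublevels_lower_bound by (rule bdd_belowI)

lemma ess_Inf_lower:
  "(\<And>y. y \<in> space M \<Longrightarrow> c \<le> f y) \<Longrightarrow> r \<in> positive_sublevels M f \<Longrightarrow> ess_Inf M f \<le> r"
  unfolding ess_Inf_def by (rule cInf_lower[OF _ bdd_below_positive_sublevels])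

lemma positive_sublevels_cong:
  "(\<And>y. y \<in> space M \<Longrightarrow> f y = f' y) \<Longrightarrow> positive_sublevels M f = positive_sublevels M f'"
  unfolding positive_sublevels_def by (intro Collect_cong bex_cong conj_cong AE_cong) auto

lemma le_ess_Inf:
  assumes "positive_sublevels M f \<noteq> {}" "AE y in M. c \<le> f y"
  shows "c \<le> ess_Inf M f"
  unfolding ess_Inf_def
proof (rule cInf_greatest[OF assms(1)])
  fix r assume "r \<in> positive_sublevels M f"
  then obtain A where A: "A \<in> sets M" "0 < emeasure M A" "AE y\<in>A in M. f y \<le> r"
    unfolding positive_sublevels_def by blast
  have "AE y\<in>A in M. c \<le> r"
    using A(3) assms(2) by eventually_elim auto
  from AE_ex_in_positive_set[OF A(1,2) this] show "c \<le> r"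
    by blast
qed

lemma positive_sublevels_nonempty:
  fixes h :: "'a \<Rightarrow> real"
  assumes "0 < emeasure M (space M)" "h \<in> borel_measurable M" "AE y in M. f y \<le> h y"
  shows "positive_sublevels M f \<noteq> {}"
proof -
  obtain n :: nat where n: "0 < emeasure M {y \<in> space M. h y \<le> real n}"
    using ex_nat_sublevel_pos[OF assms(1,2)] by blast
  have "AE y\<in>{y \<in> space M. h y \<le> real n} in M. f y \<le> real n"
    using assms(3) by eventually_elim auto
  moreover have "{y \<in> space M. h y \<le> real n} \<in> sets M"
    using assms(2) by measurable
  ultimately have "real n \<in> positive_sublevels M f"
    unfolding positive_sublevels_def using n by blast
  then show ?thesis by blast
qed

context sigma_finite_measure
begin

lemma emeasure_pair_pair_measure:
  assumes Q[measurable]: "Q \<in> sets (M \<Otimes>\<^sub>M (M \<Otimes>\<^sub>M M))"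
  shows "emeasure (M \<Otimes>\<^sub>M (M \<Otimes>\<^sub>M M)) Q =
    (\<integral>\<^sup>+x. \<integral>\<^sup>+y. \<integral>\<^sup>+z. indicator Q (x, (y, z)) \<partial>M \<partial>M \<partial>M)"
proof -
  interpret MM: pair_sigma_finite M M ..
  have "emeasure (M \<Otimes>\<^sub>M (M \<Otimes>\<^sub>M M)) Q = (\<integral>\<^sup>+x. \<integral>\<^sup>+q. indicator Q (x, q) \<partial>(M \<Otimes>\<^sub>M M) \<partial>M)"
    by (simp add: MM.emeasure_pair_measure)
  also have "\<dots> = (\<integral>\<^sup>+x. \<integral>\<^sup>+y. \<integral>\<^sup>+z. indicator Q (x, (y, z)) \<partial>M \<partial>M \<partial>M)"
    by (intro nn_integral_cong, subst nn_integral_fst[symmetric]) (auto simp: space_pair_measure)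
  finally show ?thesis .
qed

lemma emeasure_pair_measure_pair:
  assumes Q[measurable]: "Q \<in> sets ((M \<Otimes>\<^sub>M M) \<Otimes>\<^sub>M M)"
  shows "emeasure ((M \<Otimes>\<^sub>M M) \<Otimes>\<^sub>M M) Q =
    (\<integral>\<^sup>+x. \<integral>\<^sup>+y. \<integral>\<^sup>+z. indicator Q ((x, y), z) \<partial>M \<partial>M \<partial>M)"
proof -
  interpret MM: pair_sigma_finite M M ..
  have "emeasure ((M \<Otimes>\<^sub>M M) \<Otimes>\<^sub>M M) Q = (\<integral>\<^sup>+q. \<integral>\<^sup>+z. indicator Q (q, z) \<partial>M \<partial>(M \<Otimes>\<^sub>M M))"
    by (simp add: emeasure_pair_measure)
  also have "\<dots> = (\<integral>\<^sup>+x. \<integral>\<^sup>+y. \<integral>\<^sup>+z. indicator Q ((x, y), z) \<partial>M \<partial>M \<partial>M)"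
    by (subst nn_integral_fst[symmetric]) (auto intro: borel_measurable_nn_integral_fst)
  finally show ?thesis .
qed

lemma distr_pair_pair_swap12:
  "distr (M \<Otimes>\<^sub>M (M \<Otimes>\<^sub>M M)) (M \<Otimes>\<^sub>M (M \<Otimes>\<^sub>M M)) (\<lambda>(x, (y, z)). (y, (x, z)))
     = M \<Otimes>\<^sub>M (M \<Otimes>\<^sub>M M)"
  (is "distr ?A ?A ?f = ?A")
proof (rule measure_eqI)
  interpret MM: pair_sigma_finite M M ..
  fix Q assume "Q \<in> sets (distr ?A ?A ?f)"
  then have Q[measurable]: "Q \<in> sets ?A" by simp
  have "emeasure (distr ?A ?A ?f) Q = emeasure ?A (?f -` Q \<inter> space ?A)"
    by (rule emeasure_distr) measurable
  also have "\<dots> = (\<integral>\<^sup>+x. \<integral>\<^sup>+y. \<integral>\<^sup>+z. indicator Q (y, (x, z)) \<partial>M \<partial>M \<partial>M)"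
    by (subst emeasure_pair_pair_measure)
       (measurable, auto intro!: nn_integral_cong simp: space_pair_measure indicator_def)
  also have "\<dots> = (\<integral>\<^sup>+y. \<integral>\<^sup>+x. \<integral>\<^sup>+z. indicator Q (y, (x, z)) \<partial>M \<partial>M \<partial>M)"
    by (rule MM.Fubini'[symmetric]) measurable
  also have "\<dots> = emeasure ?A Q"
    by (rule emeasure_pair_pair_measure[symmetric]) measurable
  finally show "emeasure (distr ?A ?A ?f) Q = emeasure ?A Q" .
qed simp

lemma distr_pair_pair_swap23:
  "distr (M \<Otimes>\<^sub>M (M \<Otimes>\<^sub>M M)) (M \<Otimes>\<^sub>M (M \<Otimes>\<^sub>M M)) (\<lambda>(x, (y, z)). (x, (z, y)))
     = M \<Otimes>\<^sub>M (M \<Otimes>\<^sub>M M)"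
proof -
  interpret MM: pair_sigma_finite M M ..
  have swap: "distr (M \<Otimes>\<^sub>M M) (M \<Otimes>\<^sub>M M) (\<lambda>(y, z). (z, y)) = M \<Otimes>\<^sub>M M"
    using MM.distr_pair_swap by simp
  have "distr (M \<Otimes>\<^sub>M (M \<Otimes>\<^sub>M M)) (M \<Otimes>\<^sub>M (M \<Otimes>\<^sub>M M))
          (\<lambda>(x, q). (x, case q of (y, z) \<Rightarrow> (z, y)))
      = distr M M (\<lambda>x. x) \<Otimes>\<^sub>M distr (M \<Otimes>\<^sub>M M) (M \<Otimes>\<^sub>M M) (\<lambda>(y, z). (z, y))"
    by (rule pair_measure_distr[symmetric]) (auto simp: swap intro: MM.sigma_finite_measure_axioms)
  also have "\<dots> = M \<Otimes>\<^sub>M (M \<Otimes>\<^sub>M M)"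
    by (simp only: distr_id swap)
  finally show ?thesis
    by (simp add: case_prod_unfold)
qed

lemma distr_pair_measure_assoc:
  "distr ((M \<Otimes>\<^sub>M M) \<Otimes>\<^sub>M M) (M \<Otimes>\<^sub>M (M \<Otimes>\<^sub>M M)) (\<lambda>p. (fst (fst p), (snd (fst p), snd p)))
     = M \<Otimes>\<^sub>M (M \<Otimes>\<^sub>M M)"
  (is "distr ?B ?A ?f = ?A")
proof (rule measure_eqI)
  fix Q assume "Q \<in> sets (distr ?B ?A ?f)"
  then have Q[measurable]: "Q \<in> sets ?A" by simp
  have "emeasure (distr ?B ?A ?f) Q = emeasure ?B (?f -` Q \<inter> space ?B)"
    by (rule emeasure_distr) measurable
  also have "\<dots> = emeasure ?A Q"
    by (subst emeasure_pair_measure_pair, measurable, subst emeasure_pair_pair_measure, measurable)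
       (auto intro!: nn_integral_cong simp: space_pair_measure indicator_def)
  finally show "emeasure (distr ?B ?A ?f) Q = emeasure ?A Q" .
qed simp

lemma AE_pair_pair_swap12:
  assumes "AE p in M \<Otimes>\<^sub>M (M \<Otimes>\<^sub>M M). P (fst p) (fst (snd p)) (snd (snd p))"
  shows "AE p in M \<Otimes>\<^sub>M (M \<Otimes>\<^sub>M M). P (fst (snd p)) (fst p) (snd (snd p))"
proof -
  have "AE p in distr (M \<Otimes>\<^sub>M (M \<Otimes>\<^sub>M M)) (M \<Otimes>\<^sub>M (M \<Otimes>\<^sub>M M)) (\<lambda>(x, (y, z)). (y, (x, z))).
          P (fst p) (fst (snd p)) (snd (snd p))"
    using assms by (simp only: distr_pair_pair_swap12)
  from AE_distrD[OF _ this] show ?thesis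
    by (simp add: split_beta)
qed

lemma AE_pair_pair_swap23:
  assumes "AE p in M \<Otimes>\<^sub>M (M \<Otimes>\<^sub>M M). P (fst p) (fst (snd p)) (snd (snd p))"
  shows "AE p in M \<Otimes>\<^sub>M (M \<Otimes>\<^sub>M M). P (fst p) (snd (snd p)) (fst (snd p))"
proof -
  have "AE p in distr (M \<Otimes>\<^sub>M (M \<Otimes>\<^sub>M M)) (M \<Otimes>\<^sub>M (M \<Otimes>\<^sub>M M)) (\<lambda>(x, (y, z)). (x, (z, y))).
          P (fst p) (fst (snd p)) (snd (snd p))"
    using assms by (simp only: distr_pair_pair_swap23)
  from AE_distrD[OF _ this] show ?thesis
    by (simp add: split_beta)
qed

lemma AE_pair_pair_AE_last:
  assumes "AE p in M \<Otimes>\<^sub>M (M \<Otimes>\<^sub>M M). P (fst p) (fst (snd p)) (snd (snd p))"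
  shows "AE q in M \<Otimes>\<^sub>M M. AE z in M. P (fst q) (snd q) z"
proof -
  interpret MM: pair_sigma_finite M M ..
  interpret MM_M: pair_sigma_finite "M \<Otimes>\<^sub>M M" M ..
  have "AE p in distr ((M \<Otimes>\<^sub>M M) \<Otimes>\<^sub>M M) (M \<Otimes>\<^sub>M (M \<Otimes>\<^sub>M M))
                 (\<lambda>p. (fst (fst p), (snd (fst p), snd p))).
          P (fst p) (fst (snd p)) (snd (snd p))"
    using assms by (simp only: distr_pair_measure_assoc)
  from AE_distrD[OF _ this]
  have "AE p in (M \<Otimes>\<^sub>M M) \<Otimes>\<^sub>M M. P (fst (fst p)) (snd (fst p)) (snd p)"
    by simp
  then show ?thesis
    using MM_M.AE_pair by fastforce
qed

lemma AE_pair_section_sublevel_pos: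
  fixes g :: "'a \<times> 'a \<Rightarrow> real"
  assumes g[measurable]: "g \<in> borel_measurable (M \<Otimes>\<^sub>M M)"
  shows "AE q in M \<Otimes>\<^sub>M M. 0 < emeasure M {y \<in> space M. g (fst q, y) \<le> g q}"
proof -
  interpret MM: pair_sigma_finite M M ..
  define R where "R = {p \<in> space ((M \<Otimes>\<^sub>M M) \<Otimes>\<^sub>M M). g (fst (fst p), snd p) \<le> g (fst p)}"
  have R: "R \<in> sets ((M \<Otimes>\<^sub>M M) \<Otimes>\<^sub>M M)"
    unfolding R_def by measurable
  have "Pair q -` R = {y \<in> space M. g (fst q, y) \<le> g q}" if "q \<in> space (M \<Otimes>\<^sub>M M)" for q
    using that unfolding R_def by (auto simp: space_pair_measure)
  then have [measurable]:
    "(\<lambda>q. emeasure M {y \<in> space M. g (fst q, y) \<le> g q}) \<in> borel_measurable (M \<Otimes>\<^sub>M M)"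
    using measurable_emeasure_Pair[OF R] by (simp cong: measurable_cong)
  show ?thesis
  proof (rule MM.AE_pair_measure)
    show "AE x in M. AE y in M. 0 < emeasure M {z \<in> space M. g (fst (x, y), z) \<le> g (x, y)}"
      by (rule AE_I2) (simp add: AE_sublevel_pos)
  qed measurable
qed

end

context prob_space
begin

lemma AE_pair_fst:
  assumes "AE x in M. P x"
  shows "AE q in M \<Otimes>\<^sub>M M. P (fst q)"
proof (rule AE_distrD[where M'=M])
  show "AE x in distr (M \<Otimes>\<^sub>M M) M fst. P x"
    using assms by (simp only: distr_pair_fst)
qed simp

lemma AE_pair_snd:
  assumes "AE x in M. P x"
  shows "AE q in M \<Otimes>\<^sub>M M. P (snd q)"
proof -
  interpret MM: pair_prob_space M M ..
  have "AE q in distr (M \<Otimes>\<^sub>M M) (M \<Otimes>\<^sub>M M) (\<lambda>(x, y). (y, x)). P (fst q)"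
    using AE_pair_fst[OF assms] by (simp only: MM.distr_pair_swap[symmetric])
  from AE_distrD[OF _ this] show ?thesis
    by (simp add: split_beta)
qed

end

lemma ultrametric_on_collapse:
  fixes d :: "'a \<Rightarrow> 'a \<Rightarrow> real"
  assumes "p ` X \<subseteq> G"
    and nonneg: "\<And>x z. x \<in> G \<Longrightarrow> z \<in> G \<Longrightarrow> 0 \<le> d x z"
    and sym: "\<And>x z. x \<in> G \<Longrightarrow> z \<in> G \<Longrightarrow> d x z = d z x"
    and ultra: "\<And>x y z. x \<in> G \<Longrightarrow> y \<in> G \<Longrightarrow> z \<in> G \<Longrightarrow> d x z \<le> max (d x y) (d y z)"
  shows "ultrametric_on X (\<lambda>x z. if p x = p z then 0 else d (p x) (p z))"
    (is "ultrametric_on X ?d")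
proof -
  have G: "p x \<in> G" if "x \<in> X" for x
    using assms(1) that by blast
  show ?thesis
    unfolding ultrametric_on_def semimetric_on_def
  proof (intro conjI ballI)
    fix x y z assume "x \<in> X" "y \<in> X" "z \<in> X"
    note G = G[OF \<open>x \<in> X\<close>] G[OF \<open>y \<in> X\<close>] G[OF \<open>z \<in> X\<close>]
    show "0 \<le> ?d x y" "?d x y = ?d y x" "?d x x = 0"
      using nonneg[OF G(1,2)] sym[OF G(1,2)] by auto
    show ultra_xyz: "?d x z \<le> max (?d x y) (?d y z)"
      using ultra[OF G] nonneg[OF G(1,2)] nonneg[OF G(2,3)] by auto
    show "?d x z \<le> ?d x y + ?d y z"
      using ultra_xyz nonneg[OF G(1,2)] nonneg[OF G(2,3)] by auto
  qed
qed

locale ae_ultrametric = prob_space M for M :: "'a measure" +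
  fixes \<rho> :: "'a \<Rightarrow> 'a \<Rightarrow> real" and g :: "'a \<times> 'a \<Rightarrow> real"
  assumes nonneg: "x \<in> space M \<Longrightarrow> y \<in> space M \<Longrightarrow> 0 \<le> \<rho> x y"
    and sym: "x \<in> space M \<Longrightarrow> y \<in> space M \<Longrightarrow> \<rho> x y = \<rho> y x"
    and diag: "x \<in> space M \<Longrightarrow> \<rho> x x = 0"
    and g_measurable[measurable]: "g \<in> borel_measurable (M \<Otimes>\<^sub>M M)"
    and AE_eq_g: "AE p in M \<Otimes>\<^sub>M M. \<rho> (fst p) (snd p) = g p"
    and AE_ultra: "AE p in M \<Otimes>\<^sub>M (M \<Otimes>\<^sub>M M).
      \<rho> (fst p) (snd (snd p)) \<le> max (\<rho> (fst p) (fst (snd p))) (\<rho> (fst (snd p)) (snd (snd p)))"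
begin

definition ultra_ineq :: "'a \<Rightarrow> 'a \<Rightarrow> 'a \<Rightarrow> bool" where
  "ultra_ineq x y z \<longleftrightarrow> \<rho> x z \<le> max (\<rho> x y) (\<rho> y z)"

lemma AE_ultra_ineq:
  "AE p in M \<Otimes>\<^sub>M (M \<Otimes>\<^sub>M M). ultra_ineq (fst p) (fst (snd p)) (snd (snd p))"
  using AE_ultra unfolding ultra_ineq_def .

lemma AE_AE_ultra_ineq_middle: "AE y in M. AE q in M \<Otimes>\<^sub>M M. ultra_ineq (fst q) y (snd q)"
proof -
  interpret MM: pair_sigma_finite M M ..
  interpret M_MM: pair_sigma_finite M "M \<Otimes>\<^sub>M M" ..
  show ?thesis
    using M_MM.AE_pair[OF AE_pair_pair_swap12[OF AE_ultra_ineq]] by simp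
qed

lemma AE_AE_ultra_ineq_last: "AE z in M. AE q in M \<Otimes>\<^sub>M M. ultra_ineq (fst q) (snd q) z"
proof -
  interpret MM: pair_sigma_finite M M ..
  interpret M_MM: pair_sigma_finite M "M \<Otimes>\<^sub>M M" ..
  show ?thesis
    using M_MM.AE_pair[OF AE_pair_pair_swap12[OF AE_pair_pair_swap23[OF AE_ultra_ineq]]] by simp
qed

lemma AE_pair_AE_ultra_ineq_middle:
  "AE q in M \<Otimes>\<^sub>M M. AE y in M. ultra_ineq (fst q) y (snd q)"
  using AE_pair_pair_AE_last[OF AE_pair_pair_swap23[OF AE_ultra_ineq]] by simp

lemma AE_pair_AE_ultra_ineq_first:
  "AE q in M \<Otimes>\<^sub>M M. AE y in M. ultra_ineq y (fst q) (snd q)"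
  using AE_pair_pair_AE_last[OF AE_pair_pair_swap23[OF AE_pair_pair_swap12[OF AE_ultra_ineq]]] by simp

definition typical :: "'a set" where
  "typical = {w \<in> space M. (AE y in M. \<rho> w y = g (w, y))
      \<and> (AE q in M \<Otimes>\<^sub>M M. ultra_ineq (fst q) w (snd q))
      \<and> (AE q in M \<Otimes>\<^sub>M M. ultra_ineq (fst q) (snd q) w)}"

lemma AE_typical: "AE w in M. w \<in> typical"
proof -
  interpret MM: pair_sigma_finite M M ..
  have "AE x in M. AE y in M. \<rho> x y = g (x, y)"
    using MM.AE_pair[OF AE_eq_g] by simp
  then show ?thesis
    using AE_AE_ultra_ineq_middle AE_AE_ultra_ineq_last AE_space
    unfolding typical_def by eventually_elim auto
qed

definition detour :: "'a \<Rightarrow> 'a \<Rightarrow> real" where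
  "detour x z = ess_Inf M (\<lambda>y. max (\<rho> x y) (\<rho> y z))"

lemma max_dist_nonneg:
  "x \<in> space M \<Longrightarrow> z \<in> space M \<Longrightarrow> y \<in> space M \<Longrightarrow> 0 \<le> max (\<rho> x y) (\<rho> y z)"
  using nonneg by (simp add: le_max_iff_disj)

lemma detour_levels_nonempty:
  assumes "x \<in> typical" "z \<in> typical"
  shows "positive_sublevels M (\<lambda>y. max (\<rho> x y) (\<rho> y z)) \<noteq> {}"
proof (rule positive_sublevels_nonempty)
  have x: "x \<in> space M" and z: "z \<in> space M"
    using assms unfolding typical_def by auto
  show "(\<lambda>y. max \<bar>g (x, y)\<bar> \<bar>g (z, y)\<bar>) \<in> borel_measurable M"
    using x z by measurable
  have "AE y in M. \<rho> x y = g (x, y)" "AE y in M. \<rho> z y = g (z, y)"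
    using assms unfolding typical_def by auto
  then show "AE y in M. max (\<rho> x y) (\<rho> y z) \<le> max \<bar>g (x, y)\<bar> \<bar>g (z, y)\<bar>"
    using AE_space by eventually_elim (auto simp: sym[OF _ z])
qed (simp add: emeasure_space_1)

lemma detour_nonneg: "x \<in> typical \<Longrightarrow> z \<in> typical \<Longrightarrow> 0 \<le> detour x z"
  unfolding detour_def
  by (rule le_ess_Inf[OF detour_levels_nonempty])
     (auto simp: typical_def intro!: AE_I2 max_dist_nonneg)

lemma detour_sym: "x \<in> space M \<Longrightarrow> z \<in> space M \<Longrightarrow> detour x z = detour z x"
  unfolding detour_def ess_Inf_def
  by (subst positive_sublevels_cong) (auto simp: sym max.commute)

lemma detour_levels_max:
  assumes w: "w \<in> typical" and z: "z \<in> typical"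
    and a: "a \<in> positive_sublevels M (\<lambda>y. max (\<rho> x y) (\<rho> y w))"
    and b: "b \<in> positive_sublevels M (\<lambda>y. max (\<rho> w y) (\<rho> y z))"
  shows "max a b \<in> positive_sublevels M (\<lambda>y. max (\<rho> x y) (\<rho> y z))"
proof -
  interpret MM: pair_sigma_finite M M ..
  obtain A where A: "A \<in> sets M" "0 < emeasure M A" "AE y\<in>A in M. max (\<rho> x y) (\<rho> y w) \<le> a"
    using a unfolding positive_sublevels_def by blast
  obtain B where B: "B \<in> sets M" "0 < emeasure M B" "AE y\<in>B in M. max (\<rho> w y) (\<rho> y z) \<le> b"
    using b unfolding positive_sublevels_def by blast
  have "AE q in M \<Otimes>\<^sub>M M. ultra_ineq (fst q) w (snd q)"
    "AE q in M \<Otimes>\<^sub>M M. ultra_ineq (fst q) (snd q) z"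
    using w z unfolding typical_def by blast+
  then have "AE y in M. AE y' in M. ultra_ineq y w y'" "AE y in M. AE y' in M. ultra_ineq y y' z"
    by (auto dest: MM.AE_pair)
  then have "AE y\<in>A in M. max (\<rho> x y) (\<rho> y z) \<le> max a b"
    using A(3)
  proof eventually_elim
    case (elim y)
    show ?case
    proof
      assume "y \<in> A"
      have "AE y'\<in>B in M. max (\<rho> w y') (\<rho> y' z) \<le> b \<and> ultra_ineq y w y' \<and> ultra_ineq y y' z"
        using B(3) elim(1,2) by eventually_elim auto
      from AE_ex_in_positive_set[OF B(1,2) this] obtain y' where
        "max (\<rho> w y') (\<rho> y' z) \<le> b" "ultra_ineq y w y'" "ultra_ineq y y' z"
        by blast
      then show "max (\<rho> x y) (\<rho> y z) \<le> max a b"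
        using elim(3) \<open>y \<in> A\<close> unfolding ultra_ineq_def by auto
    qed
  qed
  then show ?thesis
    unfolding positive_sublevels_def using A(1,2) by blast
qed

lemma detour_ultra:
  assumes "x \<in> typical" "w \<in> typical" "z \<in> typical"
  shows "detour x z \<le> max (detour x w) (detour w z)"
  unfolding detour_def ess_Inf_def
proof (rule le_max_Inf)
  have space: "x \<in> space M" "w \<in> space M" "z \<in> space M"
    using assms unfolding typical_def by auto
  show "positive_sublevels M (\<lambda>y. max (\<rho> x y) (\<rho> y w)) \<noteq> {}"
    "positive_sublevels M (\<lambda>y. max (\<rho> w y) (\<rho> y z)) \<noteq> {}"
    using detour_levels_nonempty assms by auto
  show "bdd_below (positive_sublevels M (\<lambda>y. max (\<rho> x y) (\<rho> y w)))"
    "bdd_below (positive_sublevels M (\<lambda>y. max (\<rho> w y) (\<rho> y z)))"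
    using space by (auto intro!: bdd_below_positive_sublevels max_dist_nonneg)
  fix a b
  assume "a \<in> positive_sublevels M (\<lambda>y. max (\<rho> x y) (\<rho> y w))"
    "b \<in> positive_sublevels M (\<lambda>y. max (\<rho> w y) (\<rho> y z))"
  then have "max a b \<in> positive_sublevels M (\<lambda>y. max (\<rho> x y) (\<rho> y z))"
    by (rule detour_levels_max[OF assms(2,3)])
  then show "Inf (positive_sublevels M (\<lambda>y. max (\<rho> x y) (\<rho> y z))) \<le> max a b"
    by (rule ess_Inf_lower[where c=0, unfolded ess_Inf_def, rotated])
       (use space in \<open>auto intro: max_dist_nonneg\<close>)
qed

lemma detour_eq_at:
  assumes x: "x \<in> space M" and z: "z \<in> space M"
    and \<rho>_x: "AE y in M. \<rho> x y = g (x, y)" and \<rho>_xz: "\<rho> x z = g (x, z)"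
    and pos: "0 < emeasure M {y \<in> space M. g (x, y) \<le> g (x, z)}"
    and middle: "AE y in M. ultra_ineq x y z" and first: "AE y in M. ultra_ineq y x z"
  shows "detour x z = \<rho> x z"
proof -
  have "{y \<in> space M. g (x, y) \<le> g (x, z)} \<in> sets M"
    using x by measurable
  moreover have "AE y\<in>{y \<in> space M. g (x, y) \<le> g (x, z)} in M. max (\<rho> x y) (\<rho> y z) \<le> \<rho> x z"
    using \<rho>_x first AE_space
    by eventually_elim (auto simp: ultra_ineq_def \<rho>_xz sym[OF _ x])
  ultimately have "\<rho> x z \<in> positive_sublevels M (\<lambda>y. max (\<rho> x y) (\<rho> y z))"
    unfolding positive_sublevels_def using pos by blast
  then have "detour x z \<le> \<rho> x z"
    unfolding detour_def
    by (rule ess_Inf_lower[where c=0, rotated]) (use x z in \<open>auto intro: max_dist_nonneg\<close>)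
  moreover have "\<rho> x z \<le> detour x z"
    unfolding detour_def using \<open>\<rho> x z \<in> _\<close> middle
    by (intro le_ess_Inf) (auto simp: ultra_ineq_def elim: eventually_mono)
  ultimately show ?thesis
    by simp
qed

lemma AE_detour_eq: "AE q in M \<Otimes>\<^sub>M M. detour (fst q) (snd q) = \<rho> (fst q) (snd q)"
proof -
  interpret MM: pair_sigma_finite M M ..
  have "AE q in M \<Otimes>\<^sub>M M. AE y in M. \<rho> (fst q) y = g (fst q, y)"
    using AE_pair_fst[OF MM.AE_pair[OF AE_eq_g]] by simp
  then show ?thesis
    using AE_eq_g AE_pair_section_sublevel_pos[OF g_measurable]
      AE_pair_AE_ultra_ineq_middle AE_pair_AE_ultra_ineq_first AE_space
    by eventually_elim (rule detour_eq_at; auto simp: space_pair_measure)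
qed

lemma ex_ultrametric_AE_eq:
  "\<exists>\<rho>'. ultrametric_on (space M) \<rho>' \<and> (AE p in M \<Otimes>\<^sub>M M. \<rho>' (fst p) (snd p) = \<rho> (fst p) (snd p))"
proof -
  have "AE w\<in>space M in M. w \<in> typical"
    using AE_typical by (auto elim: eventually_mono)
  from AE_ex_in_positive_set[OF sets.top _ this] obtain w0 where "w0 \<in> typical"
    by (auto simp: emeasure_space_1)
  define p where "p x = (if x \<in> typical then x else w0)" for x
  \<comment> \<open>\<open>detour x x\<close> is the essential infimum of \<open>\<rho> x\<close> and need not vanish; hence the explicit zero.\<close>
  have "p ` space M \<subseteq> typical"
    using \<open>w0 \<in> typical\<close> unfolding p_def by auto
  then have "ultrametric_on (space M) (\<lambda>x z. if p x = p z then 0 else detour (p x) (p z))"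
    by (rule ultrametric_on_collapse)
       (auto simp: typical_def intro: detour_nonneg detour_sym detour_ultra)
  moreover have "AE q in M \<Otimes>\<^sub>M M. (if p (fst q) = p (snd q) then 0 else detour (p (fst q)) (p (snd q)))
      = \<rho> (fst q) (snd q)"
    using AE_detour_eq AE_pair_fst[OF AE_typical] AE_pair_snd[OF AE_typical]
    by eventually_elim (auto simp: p_def typical_def diag)
  ultimately show ?thesis
    by blast
qed

end

theorem mainTheorem4:
  fixes M :: "'a::polish_space measure" and \<rho> :: "'a \<Rightarrow> 'a \<Rightarrow> real"
  assumes "lebesgue_space M"
    and "continuous_measure M"
    and "semimetric_on (space M) \<rho>"
    and "(\<lambda>p. \<rho> (fst p) (snd p)) \<in> borel_measurable (completion (M \<Otimes>\<^sub>M M))"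
    and "AE p in M \<Otimes>\<^sub>M (M \<Otimes>\<^sub>M M).
           \<rho> (fst p) (snd (snd p)) \<le> max (\<rho> (fst p) (fst (snd p))) (\<rho> (fst (snd p)) (snd (snd p)))"
  shows "\<exists>\<rho>'. ultrametric_on (space M) \<rho>' \<and>
           (AE p in M \<Otimes>\<^sub>M M. \<rho>' (fst p) (snd p) = \<rho> (fst p) (snd p))"
proof -
  obtain N where "prob_space N" "M = completion N"
    using assms(1) unfolding lebesgue_space_def by blast
  then interpret prob_space M
    by (simp add: prob_space.prob_space_completion)
  obtain g where "g \<in> borel_measurable (M \<Otimes>\<^sub>M M)" "AE p in M \<Otimes>\<^sub>M M. \<rho> (fst p) (snd p) = g p"
    using completion_ex_borel_measurable_real[OF assms(4)] by blast
  then interpret ae_ultrametric M \<rho> g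
    using assms(3,5) by unfold_locales (auto simp: semimetric_on_def)
  show ?thesis
    by (rule ex_ultrametric_AE_eq)
qed

end
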